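(* Consider the two-period AI value chain game described in the context, and suppose that in period 2 both developers choose openness $\bar\eta$ (so $\eta_2=\tilde\eta_2=\bar\eta$) and the incumbent charges $w_2=w_L$. Define $$\bar{\eta}_H = \frac{k(\theta-w_H)}{2c-k(\theta-w_H)},\qquad \bar{\eta}_L = \frac{k(\theta-w_L)}{2c-k(\theta-w_L)}.$$ (a) $\bar\eta_H\le\bar\eta_L$, and: if the incumbent charges $w_1=w_H$ in period 1, the deployer selects the incumbent in period 2 if and only if $\eta_1\le\bar\eta_H$; if the incumbent charges $w_1=w_L$ in period 1, the deployer selects the incumbent in period 2 if and only if $\eta_1\le\bar\eta_L$. (b) Conditional on the period-2 outcome, the incumbent's total profit is increasing in $\eta_1$: with $\alpha_1=\frac{(1+\eta_1)(\theta-w_1)}{2c}$ and $\alpha_2=\frac{(1+k\alpha_1)(1+\bar\eta)(\theta-w_L)}{2c}$ (the deployer's optimal period-2 effort/engagement when it selects the incumbent), both $\pi_{win}(w_1,\eta_1)=w_1\alpha_1+w_L\alpha_2$ and $\pi_{lose}(w_1,\eta_1)=w_1\alpha_1$ are monotonically increasing in $\eta_1\in[0,\bar\eta]$.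
   Context: Two-period game $t\in\{1,2\}$ with an incumbent developer (developer 1), a deployer, an entrant developer (developer 2), and a unit mass of users. Parameters: $\theta>0$, $c>0$, license fees $0\le w_L\le w_H\le\theta/2$, openness cap $\bar\eta>0$, data flywheel parameter $k\ge 0$. In each period users choose engagement $\alpha_t$ maximizing $Q_t\alpha_t-\alpha_t^2/2$, so $\alpha_t=Q_t$, where $Q_t\ge0$ is the deployer's fine-tuning effort (quality). Period 1: the incumbent chooses a license fee $w_1\in\{w_H,w_L\}$ and openness $\eta_1\in[0,\bar\eta]$; the deployer chooses $Q_1$ to maximize $(\theta-w_1)\alpha_1-\frac{cQ_1^2}{1+\eta_1}$. Period 2: the incumbent chooses $w_2\in\{w_H,w_L\}$ and $\eta_2\in[0,\bar\eta]$; the entrant charges $\tilde w_2=w_L$ and chooses $\tilde\eta_2\in[0,\bar\eta]$. The deployer, for each developer, chooses its effort optimally: with the incumbent its period-2 profit is $(\theta-w_2)Q_2-\frac{cQ_2^2}{(1+k\alpha_1)(1+\eta_2)}$, with the entrant it is $(\theta-w_L)Q_2-\frac{cQ_2^2}{(1+\eta_1)(1+\tilde\eta_2)}$; it selects the incumbent iff the incumbent's optimized profit is at least the entrant's. The incumbent's payoff is $w_1\alpha_1+w_2\alpha_2$ if selected in period 2 and $w_1\alpha_1$ otherwise; the entrant's payoff is $w_L\alpha_2$ if selected and $0$ otherwise. Standing assumption: $k\le\min\Big\{\frac{2c\bar\eta}{(1+\bar\eta)(\theta-w_L)},\ \frac{2c(2\theta-w_H-w_L)(w_H-w_L)}{(\theta-w_H)^2(\theta-w_L)}\Big\}$.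 *)

theory Defs
  imports Complex_Main
begin

text \<open>Users' engagement equals the deployer's effort (alpha_t = Q_t), so engagement
  quantities are identified with the corresponding efforts.\<close>

definition dep1_profit :: "real \<Rightarrow> real \<Rightarrow> real \<Rightarrow> real \<Rightarrow> real \<Rightarrow> real" where
  "dep1_profit \<theta> c w \<eta> Q = (\<theta> - w) * Q - c * Q\<^sup>2 / (1 + \<eta>)"

definition dep2_inc_profit :: "real \<Rightarrow> real \<Rightarrow> real \<Rightarrow> real \<Rightarrow> real \<Rightarrow> real \<Rightarrow> real \<Rightarrow> real" where
  "dep2_inc_profit \<theta> c k \<alpha>1 w2 \<eta>2 Q = (\<theta> - w2) * Q - c * Q\<^sup>2 / ((1 + k * \<alpha>1) * (1 + \<eta>2))"

definition dep2_ent_profit :: "real \<Rightarrow> real \<Rightarrow> real \<Rightarrow> real \<Rightarrow> real \<Rightarrow> real \<Rightarrow> real" where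
  "dep2_ent_profit \<theta> c wL \<eta>1 \<eta>2t Q = (\<theta> - wL) * Q - c * Q\<^sup>2 / ((1 + \<eta>1) * (1 + \<eta>2t))"

definition opt_value :: "(real \<Rightarrow> real) \<Rightarrow> real" where
  "opt_value f = (SUP Q\<in>{0..}. f Q)"

definition selects_incumbent ::
  "real \<Rightarrow> real \<Rightarrow> real \<Rightarrow> real \<Rightarrow> real \<Rightarrow> real \<Rightarrow> real \<Rightarrow> real \<Rightarrow> real \<Rightarrow> bool" where
  "selects_incumbent \<theta> c k wL \<alpha>1 \<eta>1 w2 \<eta>2 \<eta>2t \<longleftrightarrow>
     opt_value (dep2_inc_profit \<theta> c k \<alpha>1 w2 \<eta>2) \<ge> opt_value (dep2_ent_profit \<theta> c wL \<eta>1 \<eta>2t)"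

definition eta_thr :: "real \<Rightarrow> real \<Rightarrow> real \<Rightarrow> real \<Rightarrow> real" where
  "eta_thr \<theta> c k w = k * (\<theta> - w) / (2 * c - k * (\<theta> - w))"

end

theory Submission
  imports Defs
begin

text \<open>Every optimization problem of the deployer is a concave quadratic \<open>a Q - c Q\<^sup>2 / D\<close>,
  maximized at \<open>Q = a D / (2 c)\<close> with value \<open>a\<^sup>2 D / (4 c)\<close>. In period 2 both optimal values
  carry the common factor \<open>(\<theta> - w\<^sub>L)\<^sup>2 (1 + \<eta>bar) / (4 c)\<close>, so the deployer stays with the
  incumbent iff \<open>1 + k \<alpha>\<^sub>1 \<ge> 1 + \<eta>\<^sub>1\<close>; substituting \<open>\<alpha>\<^sub>1 = (1 + \<eta>\<^sub>1)(\<theta> - w\<^sub>1) / (2 c)\<close> turns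
  this into \<open>\<eta>\<^sub>1 \<le> eta_thr w\<^sub>1\<close>, and \<open>eta_thr\<close> decreases in the fee because \<open>t / (2 c - t)\<close>
  increases in \<open>t\<close>. Both profits in (b) are nonnegative combinations of \<open>\<alpha>\<^sub>1\<close>, which grows
  with \<open>\<eta>\<^sub>1\<close>.\<close>

lemma concave_quadratic_completed_square:
  fixes a c D Q :: real
  assumes "c > 0" "D > 0"
  shows "a * Q - c * Q\<^sup>2 / D = a\<^sup>2 * D / (4 * c) - c * (Q - a * D / (2 * c))\<^sup>2 / D"
  using assms by (simp add: field_simps power2_eq_square)

lemma opt_value_concave_quadratic:
  fixes a c D :: real
  assumes "c > 0" "D > 0" "a \<ge> 0"
  shows "opt_value (\<lambda>Q. a * Q - c * Q\<^sup>2 / D) = a\<^sup>2 * D / (4 * c)"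
proof -
  let ?Q = "a * D / (2 * c)"
  have upper: "a * Q - c * Q\<^sup>2 / D \<le> a\<^sup>2 * D / (4 * c)" for Q
    using concave_quadratic_completed_square[OF assms(1,2), of a Q] assms(1,2) by simp
  have attained: "a * ?Q - c * ?Q\<^sup>2 / D = a\<^sup>2 * D / (4 * c)"
    using concave_quadratic_completed_square[OF assms(1,2), of a ?Q] by simp
  have "?Q \<in> {0..}"
    using assms by simp
  then show ?thesis
    unfolding opt_value_def using upper attained
    by (intro cSup_eq_maximum) (auto intro: image_eqI[of _ _ ?Q])
qed

lemma concave_quadratic_maximizer_unique:
  fixes a c D Q1 :: real
  assumes "c > 0" "D > 0" "a \<ge> 0"
    and max: "\<forall>Q\<ge>0. a * Q - c * Q\<^sup>2 / D \<le> a * Q1 - c * Q1\<^sup>2 / D"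
  shows "Q1 = a * D / (2 * c)"
proof -
  let ?Q = "a * D / (2 * c)"
  have "?Q \<ge> 0"
    using assms(1-3) by simp
  then have "a * ?Q - c * ?Q\<^sup>2 / D \<le> a * Q1 - c * Q1\<^sup>2 / D"
    using max by blast
  then have "c * (Q1 - ?Q)\<^sup>2 / D \<le> 0"
    using concave_quadratic_completed_square[OF assms(1,2), of a Q1]
      concave_quadratic_completed_square[OF assms(1,2), of a ?Q] by simp
  moreover have "c * (Q1 - ?Q)\<^sup>2 / D \<ge> 0"
    using assms by simp
  ultimately show ?thesis
    using assms by simp
qed

lemma selects_incumbent_iff_le_eta_thr:
  fixes \<theta> c k wL w \<eta>1 \<eta>bar Q1 :: real
  assumes "c > 0" "wL < \<theta>" "w < \<theta>" "0 \<le> \<eta>1" "\<eta>bar > 0" "k \<ge> 0"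
    and k_lt: "k * (\<theta> - w) < 2 * c"
    and "0 \<le> Q1"
    and Q1_max: "\<forall>Q\<ge>0. dep1_profit \<theta> c w \<eta>1 Q \<le> dep1_profit \<theta> c w \<eta>1 Q1"
  shows "selects_incumbent \<theta> c k wL Q1 \<eta>1 wL \<eta>bar \<eta>bar \<longleftrightarrow> \<eta>1 \<le> eta_thr \<theta> c k w"
proof -
  have Q1: "Q1 = (\<theta> - w) * (1 + \<eta>1) / (2 * c)"
    using concave_quadratic_maximizer_unique[of c "1 + \<eta>1" "\<theta> - w" Q1] Q1_max assms(1,3,4)
    unfolding dep1_profit_def by simp
  have "(1 + k * Q1) * (1 + \<eta>bar) > 0"
    using assms(5,6,8) by (simp add: add_pos_nonneg)
  then have inc: "opt_value (dep2_inc_profit \<theta> c k Q1 wL \<eta>bar)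
      = (1 + k * Q1) * ((\<theta> - wL)\<^sup>2 * (1 + \<eta>bar) / (4 * c))"
    unfolding dep2_inc_profit_def using opt_value_concave_quadratic[OF assms(1)] assms(2)
    by simp
  have "(1 + \<eta>1) * (1 + \<eta>bar) > 0"
    using assms(4,5) by simp
  then have ent: "opt_value (dep2_ent_profit \<theta> c wL \<eta>1 \<eta>bar)
      = (1 + \<eta>1) * ((\<theta> - wL)\<^sup>2 * (1 + \<eta>bar) / (4 * c))"
    unfolding dep2_ent_profit_def using opt_value_concave_quadratic[OF assms(1)] assms(2)
    by simp
  have common_factor_pos: "(\<theta> - wL)\<^sup>2 * (1 + \<eta>bar) / (4 * c) > 0"
    using assms(1,2,5) by simp
  have "selects_incumbent \<theta> c k wL Q1 \<eta>1 wL \<eta>bar \<eta>bar \<longleftrightarrow> 1 + \<eta>1 \<le> 1 + k * Q1"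
    unfolding selects_incumbent_def inc ent by (rule mult_le_cancel_right_pos[OF common_factor_pos])
  also have "\<dots> \<longleftrightarrow> \<eta>1 \<le> k * Q1"
    by simp
  also have "\<dots> \<longleftrightarrow> \<eta>1 * (2 * c) \<le> k * (\<theta> - w) * (1 + \<eta>1)"
    unfolding Q1 using assms(1) by (simp add: field_simps)
  also have "\<dots> \<longleftrightarrow> \<eta>1 * (2 * c - k * (\<theta> - w)) \<le> k * (\<theta> - w)"
    by (simp add: algebra_simps)
  also have "\<dots> \<longleftrightarrow> \<eta>1 \<le> eta_thr \<theta> c k w"
    unfolding eta_thr_def using k_lt by (simp add: pos_le_divide_eq)
  finally show ?thesis .
qed

lemma eta_thr_antimono:
  fixes \<theta> c k w w' :: real
  assumes "k \<ge> 0" "w \<le> w'" "w' \<le> \<theta>" "k * (\<theta> - w) < 2 * c"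
  shows "eta_thr \<theta> c k w' \<le> eta_thr \<theta> c k w"
proof -
  have "k * (\<theta> - w') \<le> k * (\<theta> - w)"
    using assms(1,2) by (simp add: mult_left_mono)
  moreover have "0 \<le> k * (\<theta> - w)"
    using assms(1-3) by simp
  ultimately show ?thesis
    unfolding eta_thr_def using assms(4) by (intro frac_le) auto
qed

lemma flywheel_cap_lt:
  fixes \<theta> c k w \<eta> :: real
  assumes "c > 0" "w < \<theta>" "\<eta> \<ge> 0"
    and k_le: "k \<le> 2 * c * \<eta> / ((1 + \<eta>) * (\<theta> - w))"
  shows "k * (\<theta> - w) < 2 * c"
proof -
  have "k * (\<theta> - w) \<le> 2 * c * \<eta> / ((1 + \<eta>) * (\<theta> - w)) * (\<theta> - w)"
    using mult_right_mono[OF k_le, of "\<theta> - w"] assms(2) by simp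
  also have "\<dots> = 2 * c * (\<eta> / (1 + \<eta>))"
    using assms(2,3) by simp
  also have "\<dots> < 2 * c"
    using assms(1,3) by (simp add: divide_less_eq)
  finally show ?thesis .
qed

lemma period1_engagement_mono:
  fixes \<theta> c w :: real
  assumes "c > 0" "w \<le> \<theta>"
  shows "mono (\<lambda>\<eta>1. (1 + \<eta>1) * (\<theta> - w) / (2 * c))"
  using assms by (intro monoI divide_right_mono mult_right_mono) auto

lemma incumbent_profit_lose_mono:
  fixes \<theta> c w1 :: real
  assumes "c > 0" "0 \<le> w1" "w1 \<le> \<theta>"
  shows "mono (\<lambda>\<eta>1. let \<alpha>1 = (1 + \<eta>1) * (\<theta> - w1) / (2 * c) in w1 * \<alpha>1)"
proof (rule monoI)
  fix r s :: real
  assume "r \<le> s"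
  with period1_engagement_mono[OF assms(1,3)]
  have "(1 + r) * (\<theta> - w1) / (2 * c) \<le> (1 + s) * (\<theta> - w1) / (2 * c)"
    by (rule monoD)
  then show "(let \<alpha>1 = (1 + r) * (\<theta> - w1) / (2 * c) in w1 * \<alpha>1)
      \<le> (let \<alpha>1 = (1 + s) * (\<theta> - w1) / (2 * c) in w1 * \<alpha>1)"
    unfolding Let_def using assms(2) by (rule mult_left_mono)
qed

lemma incumbent_profit_win_mono:
  fixes \<theta> c k w1 wL \<eta>bar :: real
  assumes "c > 0" "0 \<le> w1" "w1 \<le> \<theta>" "0 \<le> wL" "wL \<le> \<theta>" "k \<ge> 0" "\<eta>bar \<ge> 0"
  shows "mono (\<lambda>\<eta>1.
            let \<alpha>1 = (1 + \<eta>1) * (\<theta> - w1) / (2 * c);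
                \<alpha>2 = (1 + k * \<alpha>1) * (1 + \<eta>bar) * (\<theta> - wL) / (2 * c)
            in w1 * \<alpha>1 + wL * \<alpha>2)"
proof (rule monoI)
  fix r s :: real
  assume "r \<le> s"
  let ?\<alpha>1 = "\<lambda>\<eta>1. (1 + \<eta>1) * (\<theta> - w1) / (2 * c)"
  let ?\<alpha>2 = "\<lambda>\<eta>1. (1 + k * ?\<alpha>1 \<eta>1) * (1 + \<eta>bar) * (\<theta> - wL) / (2 * c)"
  have \<alpha>1_le: "?\<alpha>1 r \<le> ?\<alpha>1 s"
    using period1_engagement_mono[OF assms(1,3)] \<open>r \<le> s\<close> by (rule monoD)
  then have "k * ?\<alpha>1 r \<le> k * ?\<alpha>1 s"
    using assms(6) by (rule mult_left_mono)
  then have \<alpha>2_le: "?\<alpha>2 r \<le> ?\<alpha>2 s"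
    using assms(1,5,7) by (intro divide_right_mono mult_right_mono) auto
  show "(let \<alpha>1 = ?\<alpha>1 r; \<alpha>2 = (1 + k * \<alpha>1) * (1 + \<eta>bar) * (\<theta> - wL) / (2 * c)
        in w1 * \<alpha>1 + wL * \<alpha>2)
      \<le> (let \<alpha>1 = ?\<alpha>1 s; \<alpha>2 = (1 + k * \<alpha>1) * (1 + \<eta>bar) * (\<theta> - wL) / (2 * c)
        in w1 * \<alpha>1 + wL * \<alpha>2)"
    unfolding Let_def using mult_left_mono[OF \<alpha>1_le assms(2)] mult_left_mono[OF \<alpha>2_le assms(4)]
    by (rule add_mono)
qed

theorem lemma1:
  fixes \<theta> c wL wH \<eta>bar k :: real
  assumes h\<theta>: "\<theta> > 0" and hc: "c > 0"
    and hw: "0 \<le> wL" "wL \<le> wH" "wH \<le> \<theta> / 2"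
    and h\<eta>: "\<eta>bar > 0" and hk0: "k \<ge> 0"
    and hk1: "k \<le> 2 * c * \<eta>bar / ((1 + \<eta>bar) * (\<theta> - wL))"
    and hk2: "k \<le> 2 * c * (2 * \<theta> - wH - wL) * (wH - wL) / ((\<theta> - wH)\<^sup>2 * (\<theta> - wL))"
  shows
    "eta_thr \<theta> c k wH \<le> eta_thr \<theta> c k wL
     \<and> (\<forall>\<eta>1 Q1. 0 \<le> \<eta>1 \<and> \<eta>1 \<le> \<eta>bar \<and> 0 \<le> Q1
          \<and> (\<forall>Q\<ge>0. dep1_profit \<theta> c wH \<eta>1 Q \<le> dep1_profit \<theta> c wH \<eta>1 Q1)
          \<longrightarrow> (selects_incumbent \<theta> c k wL Q1 \<eta>1 wL \<eta>bar \<eta>bar \<longleftrightarrow> \<eta>1 \<le> eta_thr \<theta> c k wH))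
     \<and> (\<forall>\<eta>1 Q1. 0 \<le> \<eta>1 \<and> \<eta>1 \<le> \<eta>bar \<and> 0 \<le> Q1
          \<and> (\<forall>Q\<ge>0. dep1_profit \<theta> c wL \<eta>1 Q \<le> dep1_profit \<theta> c wL \<eta>1 Q1)
          \<longrightarrow> (selects_incumbent \<theta> c k wL Q1 \<eta>1 wL \<eta>bar \<eta>bar \<longleftrightarrow> \<eta>1 \<le> eta_thr \<theta> c k wL))
     \<and> (\<forall>w1\<in>{wH, wL}.
          mono_on {0..\<eta>bar} (\<lambda>\<eta>1.
            let \<alpha>1 = (1 + \<eta>1) * (\<theta> - w1) / (2 * c);
                \<alpha>2 = (1 + k * \<alpha>1) * (1 + \<eta>bar) * (\<theta> - wL) / (2 * c)
            in w1 * \<alpha>1 + wL * \<alpha>2)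
        \<and> mono_on {0..\<eta>bar} (\<lambda>\<eta>1.
            let \<alpha>1 = (1 + \<eta>1) * (\<theta> - w1) / (2 * c) in w1 * \<alpha>1))"
  \<comment> \<open>\<open>hk2\<close> is deliberately unused: none of these claims needs it.\<close>
proof -
  have wL_lt: "wL < \<theta>" and wH_lt: "wH < \<theta>"
    using hw h\<theta> by linarith+
  have kL: "k * (\<theta> - wL) < 2 * c"
    using flywheel_cap_lt[OF hc wL_lt _ hk1] h\<eta> by simp
  have "k * (\<theta> - wH) \<le> k * (\<theta> - wL)"
    using hk0 hw(2) by (simp add: mult_left_mono)
  with kL have kH: "k * (\<theta> - wH) < 2 * c"
    by linarith
  have profits_mono: "mono_on {0..\<eta>bar} (\<lambda>\<eta>1.
            let \<alpha>1 = (1 + \<eta>1) * (\<theta> - w1) / (2 * c);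
                \<alpha>2 = (1 + k * \<alpha>1) * (1 + \<eta>bar) * (\<theta> - wL) / (2 * c)
            in w1 * \<alpha>1 + wL * \<alpha>2)
        \<and> mono_on {0..\<eta>bar} (\<lambda>\<eta>1.
            let \<alpha>1 = (1 + \<eta>1) * (\<theta> - w1) / (2 * c) in w1 * \<alpha>1)"
    if "w1 \<in> {wH, wL}" for w1
  proof -
    have "0 \<le> w1" "w1 \<le> \<theta>"
      using that hw wH_lt by auto
    then show ?thesis
      using incumbent_profit_win_mono[OF hc _ _ hw(1) less_imp_le[OF wL_lt] hk0 less_imp_le[OF h\<eta>]]
        incumbent_profit_lose_mono[OF hc]
      by (simp add: mono_imp_mono_on)
  qed
  show ?thesis
    using eta_thr_antimono[OF hk0 hw(2) less_imp_le[OF wH_lt] kL] profits_mono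
      selects_incumbent_iff_le_eta_thr[OF hc wL_lt wH_lt _ h\<eta> hk0 kH]
      selects_incumbent_iff_le_eta_thr[OF hc wL_lt wL_lt _ h\<eta> hk0 kL]
    by blast
qed

end
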